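(* Let $n\ge1$, $\mathbf y\in\mathbb R^n$, and let $(T_1,\dots,T_m)$ be a partition of $\{1,\dots,n\}$ into sets of consecutive integers, i.e. each $T_j=\{s_j,s_j+1,\dots,t_j\}$ for some $s_j\le t_j$. Then $$k\big(\Pi_{\mathcal S_n^\uparrow}(\mathbf y)\big)\le\sum_{j=1}^m k\big(\Pi_{\mathcal S^\uparrow_{|T_j|}}(\mathbf y_{T_j})\big).$$
   Context: $\mathcal S_m^\uparrow=\{\mathbf u\in\mathbb R^m:u_1\le\dots\le u_m\}$ ($\mathcal S_1^\uparrow=\mathbb R$); $\Pi_K$ is the Euclidean projection onto $K$. For $\mathbf v\in\mathbb R^n$ and $T=\{t_1<\dots<t_{|T|}\}\subseteq\{1,\dots,n\}$, $\mathbf v_T=(v_{t_1},\dots,v_{t_{|T|}})^T\in\mathbb R^{|T|}$. $k(\mathbf u)$ is the number of distinct coordinates of $\mathbf u$. *)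

theory Defs
  imports Complex_Main
begin

text \<open>Vectors in R^m are represented as real lists of length m; coordinate i
 (1-based) of v is v ! (i - 1).\<close>

definition sqdist :: "real list \<Rightarrow> real list \<Rightarrow> real" where
  "sqdist u v = (\<Sum>(a, b) \<leftarrow> zip u v. (a - b)^2)"

definition mono_cone :: "nat \<Rightarrow> real list set" where
  "mono_cone m = {u. length u = m \<and> sorted u}"

definition proj :: "real list set \<Rightarrow> real list \<Rightarrow> real list" where
  "proj K y = (THE u. u \<in> K \<and> (\<forall>v\<in>K. sqdist u y \<le> sqdist v y))"

definition subvec :: "real list \<Rightarrow> nat set \<Rightarrow> real list" where
  "subvec v T = map (\<lambda>i. v ! (i - 1)) (sorted_list_of_set T)"

definition kdist :: "real list \<Rightarrow> nat" where
  "kdist u = card (set u)"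

end

theory Submission imports Defs "HOL-Analysis.Analysis" begin

text \<open>Let u be the isotonic regression of y. On a block {s..t}, the restriction of u is the
  nearest monotone vector to the block of y among those with values in [u_s, u_t], because
  splicing any such vector into u keeps u monotone. The nearest monotone vector within a box is
  the clipping to the box of the unconstrained one, Pi(y_T); hence u_T takes no more distinct
  values than Pi(y_T). Since the blocks cover {1..n}, summing gives the bound.\<close>

definition is_nearest :: "real list set \<Rightarrow> real list \<Rightarrow> real list \<Rightarrow> bool" where
  "is_nearest K y u \<longleftrightarrow> u \<in> K \<and> (\<forall>v\<in>K. sqdist u y \<le> sqdist v y)"

lemma sqdist_conv_sum:
  assumes "length u = k" "length y = k"
  shows "sqdist u y = (\<Sum>i<k. (u!i - y!i)^2)"
proof -
  have "map (\<lambda>(a, b). (a - b)^2) (zip u y) = map (\<lambda>i. (u!i - y!i)^2) [0..<k]"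
    by (rule nth_equalityI) (use assms in auto)
  then show ?thesis unfolding sqdist_def
    by (simp add: interv_sum_list_conv_sum_set_nat atLeast0LessThan)
qed

lemma sqdist_append:
  "length xs = length xs' \<Longrightarrow> sqdist (xs @ ys) (xs' @ ys') = sqdist xs xs' + sqdist ys ys'"
  by (simp add: sqdist_def zip_append)

lemma sqdist_expand:
  assumes "length v = k" "length c = k" "length y = k"
  shows "sqdist v y
           = sqdist c y + 2 * (\<Sum>i<k. (c!i - y!i) * (v!i - c!i)) + (\<Sum>i<k. (v!i - c!i)^2)"
proof -
  have "(\<Sum>i<k. (v!i - y!i)^2)
          = (\<Sum>i<k. (c!i - y!i)^2 + 2 * ((c!i - y!i) * (v!i - c!i)) + (v!i - c!i)^2)"
    by (rule sum.cong) (auto simp: power2_eq_square algebra_simps)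
  then show ?thesis using assms
    by (simp add: sqdist_conv_sum sum.distrib sum_distrib_left)
qed

lemma eq_if_variational_ineq_and_sqdist_le:
  assumes len: "length v = k" "length c = k" "length y = k"
    and vi: "(\<Sum>i<k. (c!i - y!i) * (v!i - c!i)) \<ge> 0"
    and le: "sqdist v y \<le> sqdist c y"
  shows "v = c"
proof -
  have "(\<Sum>i<k. (v!i - c!i)^2) \<le> 0"
    using sqdist_expand[OF len] vi le by linarith
  then have "(\<Sum>i<k. (v!i - c!i)^2) = 0" by (simp add: antisym sum_nonneg)
  then have "\<forall>i<k. (v!i - c!i)^2 = 0" by (subst (asm) sum_nonneg_eq_0_iff) auto
  then show ?thesis using len by (intro nth_equalityI) auto
qed

definition seg :: "real list \<Rightarrow> real list \<Rightarrow> real \<Rightarrow> real list" where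
  "seg u v t = map (\<lambda>i. u!i + t * (v!i - u!i)) [0..<length u]"

lemma nearest_variational_ineq:
  assumes len: "length u = k" "length v = k" "length y = k"
    and near: "is_nearest K y u"
    and seg: "\<And>t. 0 < t \<Longrightarrow> t \<le> 1 \<Longrightarrow> seg u v t \<in> K"
  shows "(\<Sum>i<k. (u!i - y!i) * (v!i - u!i)) \<ge> 0"
proof (rule ccontr)
  define A where "A = (\<Sum>i<k. (u!i - y!i) * (v!i - u!i))"
  define B where "B = (\<Sum>i<k. (v!i - u!i)^2)"
  assume "\<not> ?thesis"
  then have A: "A < 0" by (simp add: A_def)
  have key: "2 * A + t * B \<ge> 0" if t: "0 < t" "t \<le> 1" for t
  proof -
    have "length (seg u v t) = k" using len by (simp add: seg_def)
    then have "sqdist (seg u v t) y = sqdist u y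
        + 2 * (\<Sum>i<k. (u!i - y!i) * (seg u v t!i - u!i)) + (\<Sum>i<k. (seg u v t!i - u!i)^2)"
      using sqdist_expand len by blast
    also have "(\<Sum>i<k. (u!i - y!i) * (seg u v t!i - u!i)) = t * A"
      unfolding A_def sum_distrib_left
      by (rule sum.cong) (use len in \<open>auto simp: seg_def\<close>)
    also have "(\<Sum>i<k. (seg u v t!i - u!i)^2) = t^2 * B"
      unfolding B_def sum_distrib_left
      by (rule sum.cong) (use len in \<open>auto simp: seg_def power_mult_distrib\<close>)
    finally have "0 \<le> 2 * (t * A) + t^2 * B"
      using near seg[OF t] unfolding is_nearest_def by force
    also have "\<dots> = t * (2 * A + t * B)" by (simp add: power2_eq_square algebra_simps)
    finally show ?thesis using t by (simp add: zero_le_mult_iff)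
  qed
  have B: "B > 0" using key[of 1] A by linarith
  define t where "t = min 1 (- A / B)"
  have t: "0 < t" "t \<le> 1" using A B by (auto simp: t_def divide_neg_pos)
  have "t * B \<le> - A" using B by (simp add: t_def min_def field_simps split: if_splits)
  with key[OF t] A show False by linarith
qed

lemma seg_mem_mono_cone:
  assumes "u \<in> mono_cone k" "v \<in> mono_cone k" "0 \<le> t" "t \<le> 1"
  shows "seg u v t \<in> mono_cone k"
proof -
  have u: "length u = k" "sorted u" and v: "length v = k" "sorted v"
    using assms by (auto simp: mono_cone_def)
  have len: "length (seg u v t) = k" using u by (simp add: seg_def)
  have nth: "seg u v t ! i = (1 - t) * u!i + t * v!i" if "i < k" for i
    using that u by (simp add: seg_def algebra_simps)
  have "seg u v t ! i \<le> seg u v t ! j" if ij: "i \<le> j" "j < k" for i j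
  proof -
    have "u!i \<le> u!j" "v!i \<le> v!j"
      using sorted_nth_mono[OF u(2) ij(1)] sorted_nth_mono[OF v(2) ij(1)] ij u v by auto
    then have "(1 - t) * u!i + t * v!i \<le> (1 - t) * u!j + t * v!j"
      using assms by (intro add_mono mult_left_mono) auto
    then show ?thesis using ij by (simp add: nth)
  qed
  then show ?thesis using len by (simp add: mono_cone_def sorted_iff_nth_mono)
qed

lemma nearest_mono_cone_variational_ineq:
  assumes "length y = k" "is_nearest (mono_cone k) y u" "v \<in> mono_cone k"
  shows "(\<Sum>i<k. (u!i - y!i) * (v!i - u!i)) \<ge> 0"
  using assms
  by (intro nearest_variational_ineq[of u k v y "mono_cone k"] seg_mem_mono_cone)
     (auto simp: is_nearest_def mono_cone_def)

definition clip :: "real \<Rightarrow> real \<Rightarrow> real \<Rightarrow> real" where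
  "clip a b x = max a (min x b)"

lemma clip_mono: "a \<le> b \<Longrightarrow> x \<le> x' \<Longrightarrow> clip a b x \<le> clip a b x'"
  unfolding clip_def by auto

lemma clip_diff_mono: "a \<le> b \<Longrightarrow> x \<le> x' \<Longrightarrow> x - clip a b x \<le> x' - clip a b x'"
  unfolding clip_def by auto

lemma clip_in_interval: "a \<le> b \<Longrightarrow> clip a b x \<in> {a..b}"
  unfolding clip_def by auto

lemma clip_sq_dist_le: "z \<in> {a..b} \<Longrightarrow> (clip a b x - z)^2 \<le> (x - z)^2"
  unfolding clip_def by (auto simp: abs_le_square_iff[symmetric])

lemma clip_variational_ineq: "v \<in> {a..b} \<Longrightarrow> (clip a b x - x) * (v - clip a b x) \<ge> 0"
  unfolding clip_def by (cases "x \<le> a"; cases "x \<le> b") (auto simp: mult_nonpos_nonpos)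

lemma nearest_mono_cone_exists:
  assumes "length y = k"
  shows "\<exists>u. is_nearest (mono_cone k) y u"
proof -
  define r where "r = (\<Sum>i<k. \<bar>y!i\<bar>)"
  have y_bound: "y!i \<in> {-r..r}" if "i < k" for i
  proof -
    have "\<bar>y!i\<bar> \<le> r" unfolding r_def by (rule member_le_sum) (use that in auto)
    then show ?thesis by auto
  qed
  have r: "-r \<le> r" unfolding r_def by (simp add: sum_nonneg)
  define B where "B = (\<lambda>i::nat. if i < k then {-r..r} else {0::real})"
  define M where "M = (\<Inter>p\<in>{p. fst p \<le> snd p \<and> snd p < k}. {f::nat\<Rightarrow>real. f (fst p) \<le> f (snd p)})"
  define S where "S = PiE UNIV B \<inter> M"
  have "compactin (product_topology (\<lambda>_. euclidean) UNIV) (PiE UNIV B)"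
    unfolding compactin_PiE by (auto simp: B_def)
  then have "compact (PiE UNIV B)" by (simp add: euclidean_product_topology)
  moreover have "closed M"
    unfolding M_def by (intro closed_INT ballI closed_Collect_le) auto
  ultimately have "compact S" unfolding S_def by (rule compact_Int_closed)
  define F where "F = (\<lambda>f::nat\<Rightarrow>real. \<Sum>i<k. (f i - y!i)^2)"
  have "continuous_on S F" unfolding F_def
    by (intro continuous_intros continuous_on_subset[OF continuous_on_product_coordinates]) auto
  moreover have "(\<lambda>_. 0) \<in> S"
    using r unfolding S_def M_def B_def by (auto simp: PiE_def extensional_def)
  ultimately obtain f where f: "f \<in> S" "\<And>g. g \<in> S \<Longrightarrow> F f \<le> F g"
    using continuous_attains_inf[OF \<open>compact S\<close>] by blast
  define u where "u = map f [0..<k]"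
  have "u \<in> mono_cone k"
    using f(1) unfolding u_def mono_cone_def S_def M_def by (auto simp: sorted_iff_nth_mono)
  moreover have "sqdist u y \<le> sqdist v y" if v: "v \<in> mono_cone k" for v
  proof -
    text \<open>Clipping v to the box containing y does not increase its distance to y.\<close>
    define g where "g = (\<lambda>i. if i < k then clip (-r) r (v!i) else 0)"
    have lv: "length v = k" "sorted v" using v by (auto simp: mono_cone_def)
    have "g \<in> S"
      unfolding S_def M_def B_def g_def
      using clip_in_interval[OF r] clip_mono[OF r] sorted_nth_mono[OF lv(2)] lv(1)
      by (auto simp: PiE_def extensional_def)
    then have "F f \<le> F g" by (rule f(2))
    also have "F g \<le> sqdist v y"
      unfolding F_def sqdist_conv_sum[OF lv(1) assms] g_def
      by (rule sum_mono) (use clip_sq_dist_le y_bound in auto)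
    finally show ?thesis unfolding F_def u_def using assms by (simp add: sqdist_conv_sum)
  qed
  ultimately show ?thesis unfolding is_nearest_def by blast
qed

lemma nearest_mono_cone_unique:
  assumes "length y = k" "is_nearest (mono_cone k) y u" "is_nearest (mono_cone k) y u'"
  shows "u' = u"
proof (rule eq_if_variational_ineq_and_sqdist_le)
  show "length u' = k" "length u = k"
    using assms by (auto simp: is_nearest_def mono_cone_def)
  show "(\<Sum>i<k. (u!i - y!i) * (u'!i - u!i)) \<ge> 0"
    using assms by (auto intro: nearest_mono_cone_variational_ineq simp: is_nearest_def)
  show "sqdist u' y \<le> sqdist u y" using assms by (auto simp: is_nearest_def)
qed fact

lemma is_nearest_proj_mono_cone:
  assumes "length y = k"
  shows "is_nearest (mono_cone k) y (proj (mono_cone k) y)"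
proof -
  obtain u where "is_nearest (mono_cone k) y u"
    using nearest_mono_cone_exists[OF assms] by blast
  then have "proj (mono_cone k) y = u"
    unfolding proj_def is_nearest_def[symmetric]
    using nearest_mono_cone_unique[OF assms] by blast
  with \<open>is_nearest (mono_cone k) y u\<close> show ?thesis by simp
qed

lemma sorted_set_subset_hd_last:
  assumes "sorted xs"
  shows "set xs \<subseteq> {hd xs..last xs}"
proof
  fix x assume "x \<in> set xs"
  then obtain i where i: "i < length xs" "x = xs!i" by (auto simp: in_set_conv_nth)
  then have "xs \<noteq> []" by auto
  with i assms show "x \<in> {hd xs..last xs}"
    by (auto simp: hd_conv_nth last_conv_nth intro: sorted_nth_mono)
qed

lemma sorted_replace_middle:
  assumes sorted: "sorted (xs @ ys @ zs)" and "ys \<noteq> []"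
    and vs: "sorted vs" "set vs \<subseteq> {hd ys..last ys}"
  shows "sorted (xs @ vs @ zs)"
proof -
  have hd_last: "hd ys \<in> set ys" "last ys \<in> set ys" using \<open>ys \<noteq> []\<close> by simp_all
  have below: "x \<le> hd ys" if "x \<in> set xs" for x
    using sorted that hd_last by (auto simp: sorted_append)
  have above: "last ys \<le> z" if "z \<in> set zs" for z
    using sorted that hd_last by (auto simp: sorted_append)
  have "x \<le> v" if "x \<in> set xs" "v \<in> set vs" for x v
    using below[OF that(1)] vs(2) that(2) by force
  moreover have "v \<le> z" if "v \<in> set vs" "z \<in> set zs" for v z
    using above[OF that(2)] vs(2) that(1) by force
  ultimately show ?thesis using sorted vs(1) by (auto simp: sorted_append)
qed

lemma nearest_mono_cone_middle:
  assumes near: "is_nearest (mono_cone (length (xs @ ys @ zs))) (xs' @ ys' @ zs') (xs @ ys @ zs)"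
    and len: "length xs' = length xs" "length ys' = length ys"
    and "ys \<noteq> []"
  shows "is_nearest (mono_cone (length ys) \<inter> {v. set v \<subseteq> {hd ys..last ys}}) ys' ys"
proof -
  have sorted: "sorted (xs @ ys @ zs)" using near by (simp add: is_nearest_def mono_cone_def)
  have "sorted ys" using sorted by (simp add: sorted_append)
  then have "ys \<in> mono_cone (length ys) \<inter> {v. set v \<subseteq> {hd ys..last ys}}"
    using sorted_set_subset_hd_last by (simp add: mono_cone_def)
  moreover have "sqdist ys ys' \<le> sqdist v ys'"
    if v: "v \<in> mono_cone (length ys) \<inter> {v. set v \<subseteq> {hd ys..last ys}}" for v
  proof -
    have "xs @ v @ zs \<in> mono_cone (length (xs @ ys @ zs))"
      using v sorted_replace_middle[OF sorted \<open>ys \<noteq> []\<close>] by (simp add: mono_cone_def)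
    then have "sqdist (xs @ ys @ zs) (xs' @ ys' @ zs') \<le> sqdist (xs @ v @ zs) (xs' @ ys' @ zs')"
      using near by (simp add: is_nearest_def)
    then show ?thesis using len v by (simp add: sqdist_append mono_cone_def)
  qed
  ultimately show ?thesis by (simp add: is_nearest_def)
qed

lemma nearest_mono_cone_box_eq_clip:
  assumes ab: "a \<le> b" and lz: "length z = k"
    and w: "is_nearest (mono_cone k) z w"
    and u: "is_nearest (mono_cone k \<inter> {v. set v \<subseteq> {a..b}}) z u"
  shows "u = map (clip a b) w"
proof (rule eq_if_variational_ineq_and_sqdist_le)
  define c where "c = map (clip a b) w"
  have lw: "length w = k" "sorted w" and lu: "length u = k" "sorted u" "set u \<subseteq> {a..b}"
    using w u by (auto simp: is_nearest_def mono_cone_def)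
  have c: "c \<in> mono_cone k \<inter> {v. set v \<subseteq> {a..b}}"
    using lw clip_in_interval[OF ab] clip_mono[OF ab]
    by (auto simp: c_def mono_cone_def sorted_map intro: sorted_wrt_mono_rel[OF _ lw(2)])
  show "length u = k" "length (map (clip a b) w) = k" "length z = k" using lw lu lz by simp_all
  show "sqdist u z \<le> sqdist (map (clip a b) w) z" using u c by (simp add: is_nearest_def c_def)
  text \<open>Since x - clip a b x is monotone, q = u + (w - c) is monotone, so the variational
    inequality at w can be tested against q.\<close>
  define q where "q = map (\<lambda>i. u!i + (w!i - c!i)) [0..<k]"
  have "q \<in> mono_cone k"
    unfolding mono_cone_def sorted_iff_nth_mono
  proof (simp add: q_def, intro allI impI)
    fix i j assume ij: "i \<le> j" "j < k"
    have "u!i \<le> u!j" "w!i \<le> w!j"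
      using sorted_nth_mono[OF lu(2) ij(1)] sorted_nth_mono[OF lw(2) ij(1)] ij lw lu by auto
    moreover have "w!i - c!i \<le> w!j - c!j"
      using ij lw \<open>w!i \<le> w!j\<close> by (simp add: c_def clip_diff_mono[OF ab])
    ultimately show "u!i + (w!i - c!i) \<le> u!j + (w!j - c!j)" by simp
  qed
  then have "(\<Sum>i<k. (w!i - z!i) * (q!i - w!i)) \<ge> 0"
    using nearest_mono_cone_variational_ineq[OF lz w] by blast
  moreover have "(\<Sum>i<k. (c!i - w!i) * (u!i - c!i)) \<ge> 0"
  proof (rule sum_nonneg)
    fix i assume "i \<in> {..<k}"
    then have "u!i \<in> {a..b}" using lu by (auto dest: nth_mem)
    then show "(c!i - w!i) * (u!i - c!i) \<ge> 0"
      using \<open>i \<in> {..<k}\<close> lw by (simp add: c_def clip_variational_ineq)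
  qed
  moreover have "(\<Sum>i<k. (c!i - z!i) * (u!i - c!i))
      = (\<Sum>i<k. (c!i - w!i) * (u!i - c!i)) + (\<Sum>i<k. (w!i - z!i) * (q!i - w!i))"
    unfolding sum.distrib[symmetric] by (rule sum.cong) (auto simp: q_def algebra_simps)
  ultimately show "(\<Sum>i<k. (map (clip a b) w!i - z!i) * (u!i - map (clip a b) w!i)) \<ge> 0"
    unfolding c_def by linarith
qed

lemma subvec_atLeastAtMost:
  assumes "1 \<le> s" "t \<le> length v"
  shows "subvec v {s..t} = take (Suc t - s) (drop (s - 1) v)"
proof -
  have "sorted_list_of_set {s..t} = [s..<Suc t]"
    using sorted_list_of_set_range[of s "Suc t"] by (simp add: atLeastLessThanSuc_atLeastAtMost)
  then show ?thesis unfolding subvec_def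
    by (intro nth_equalityI) (use assms in \<open>auto simp del: upt_Suc\<close>)
qed

lemma set_subvec: "finite T \<Longrightarrow> set (subvec v T) = (\<lambda>i. v!(i - 1)) ` T"
  by (simp add: subvec_def)

lemma kdist_le_sum_kdist_subvec:
  fixes m :: nat
  assumes "(\<Union>j<m. T j) = {1..length u}" "\<And>j. j < m \<Longrightarrow> finite (T j)"
  shows "kdist u \<le> (\<Sum>j<m. kdist (subvec u (T j)))"
proof -
  have "set u = (\<lambda>i. u!(i - 1)) ` {1..length u}"
    using set_subvec[of "{1..length u}" u] subvec_atLeastAtMost[of 1 "length u" u] by simp
  then have "set u = (\<Union>j<m. set (subvec u (T j)))"
    unfolding assms(1)[symmetric] by (simp add: set_subvec assms(2) image_UN)
  then show ?thesis unfolding kdist_def by (simp add: card_UN_le)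
qed

lemma kdist_subvec_proj_le:
  assumes ly: "length y = n" and u: "is_nearest (mono_cone n) y u"
    and st: "1 \<le> s" "s \<le> t" "t \<le> n"
  shows "kdist (subvec u {s..t}) \<le> kdist (proj (mono_cone (card {s..t})) (subvec y {s..t}))"
proof -
  define p where "p = s - 1"
  define L where "L = Suc t - s"
  have lu: "length u = n" using u by (simp add: is_nearest_def mono_cone_def)
  define ub where "ub = take L (drop p u)"
  define z where "z = take L (drop p y)"
  have blocks: "take p xs @ take L (drop p xs) @ drop (p + L) xs = xs" for xs :: "real list"
    by (metis append_take_drop_id drop_drop add.commute)
  have len: "length (take p y) = length (take p u)" "length z = L" "length ub = L"
    using lu ly st by (simp_all add: p_def L_def z_def ub_def)
  have "ub \<noteq> []" using len(3) st by (auto simp: L_def)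
  moreover have "is_nearest (mono_cone (length (take p u @ ub @ drop (p + L) u)))
      (take p y @ z @ drop (p + L) y) (take p u @ ub @ drop (p + L) u)"
    unfolding ub_def z_def blocks using u lu by simp
  ultimately have ub: "is_nearest (mono_cone L \<inter> {v. set v \<subseteq> {hd ub..last ub}}) z ub"
    using nearest_mono_cone_middle len by (metis (no_types, lifting))
  have "hd ub \<le> last ub"
    using ub hd_in_set[OF \<open>ub \<noteq> []\<close>] by (auto simp: is_nearest_def)
  then have "ub = map (clip (hd ub) (last ub)) (proj (mono_cone L) z)"
    using nearest_mono_cone_box_eq_clip is_nearest_proj_mono_cone len ub by blast
  then have "kdist ub \<le> kdist (proj (mono_cone L) z)"
    unfolding kdist_def by (metis card_image_le finite_set set_map)
  moreover have "subvec u {s..t} = ub" "subvec y {s..t} = z" "card {s..t} = L"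
    using st lu ly by (simp_all add: subvec_atLeastAtMost ub_def z_def p_def L_def)
  ultimately show ?thesis by simp
qed

theorem mainTheorem5:
  fixes n m :: nat and y :: "real list" and T :: "nat \<Rightarrow> nat set"
  assumes "n \<ge> 1" and "length y = n"
    and "\<forall>j<m. \<exists>s t. s \<le> t \<and> T j = {s..t}"
    and "\<forall>i<m. \<forall>j<m. i \<noteq> j \<longrightarrow> T i \<inter> T j = {}"
    and "(\<Union>j<m. T j) = {1..n}"
  shows "kdist (proj (mono_cone n) y)
           \<le> (\<Sum>j<m. kdist (proj (mono_cone (card (T j))) (subvec y (T j))))"
proof -
  define u where "u = proj (mono_cone n) y"
  have u: "is_nearest (mono_cone n) y u"
    unfolding u_def using is_nearest_proj_mono_cone[OF assms(2)] .
  then have "length u = n" by (simp add: is_nearest_def mono_cone_def)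
  then have "kdist u \<le> (\<Sum>j<m. kdist (subvec u (T j)))"
    using assms(3,5) by (intro kdist_le_sum_kdist_subvec) force+
  also have "\<dots> \<le> (\<Sum>j<m. kdist (proj (mono_cone (card (T j))) (subvec y (T j))))"
  proof (rule sum_mono)
    fix j assume j: "j \<in> {..<m}"
    then obtain s t where st: "s \<le> t" "T j = {s..t}" using assms(3) by blast
    moreover have "T j \<subseteq> {1..n}" using j assms(5) by blast
    ultimately have "1 \<le> s" "t \<le> n" by auto
    with st show "kdist (subvec u (T j)) \<le> kdist (proj (mono_cone (card (T j))) (subvec y (T j)))"
      using kdist_subvec_proj_le[OF assms(2) u] by simp
  qed
  finally show ?thesis unfolding u_def .
qed

end
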